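(* Let $N\ge1$, $f:\mathbb{N}^N\to\mathbb{N}$, $p$ a prime, $n$ a nonnegative integer and $\mathbf{m}\in\mathbb{N}^N$. Then $\binom{np}{p\mathbf{m}}_f\equiv\binom{n}{\mathbf{m}}_f\pmod p$.
   Context: $\mathbb{N}=\{0,1,2,\dots\}$. For $k\ge0$ and $\mathbf{x}\in\mathbb{N}^N$, $\binom{k}{\mathbf{x}}_f=\sum_{\mathbf{m}_1+\cdots+\mathbf{m}_k=\mathbf{x}} f(\mathbf{m}_1)\cdots f(\mathbf{m}_k)$ over tuples of vectors in $\mathbb{N}^N$. *)

theory Defs
  imports Main "HOL-Number_Theory.Number_Theory"
begin

text \<open>Vectors in N^N are modelled as functions nat => nat vanishing outside {..<N}.\<close>
definition nvecs :: "nat \<Rightarrow> (nat \<Rightarrow> nat) set" where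
  "nvecs N = {x. \<forall>i\<ge>N. x i = 0}"

text \<open>k-tuples (m_0,...,m_(k-1)) of vectors of N^N with m_0 + ... + m_(k-1) = x;
  a tuple is a function on {..<k}, extended by the zero vector outside.\<close>
definition tuples_sum :: "nat \<Rightarrow> nat \<Rightarrow> (nat \<Rightarrow> nat) \<Rightarrow> (nat \<Rightarrow> nat \<Rightarrow> nat) set" where
  "tuples_sum N k x = {ms. (\<forall>j<k. ms j \<in> nvecs N) \<and> (\<forall>j\<ge>k. ms j = (\<lambda>_. 0))
      \<and> (\<forall>i. (\<Sum>j<k. ms j i) = x i)}"

definition gbinom :: "nat \<Rightarrow> ((nat \<Rightarrow> nat) \<Rightarrow> nat) \<Rightarrow> nat \<Rightarrow> (nat \<Rightarrow> nat) \<Rightarrow> nat" where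
  "gbinom N f k x = (\<Sum>ms\<in>tuples_sum N k x. \<Prod>j<k. f (ms j))"

end

theory Submission
  imports Defs "HOL-Combinatorics.Orbits"
begin

text \<open>Cut the index range \<open>{..<n*p}\<close> of a tuple into \<open>n\<close> blocks of length \<open>p\<close> and let
  \<open>\<int>/p\<close> act by rotating every block simultaneously. This preserves the sum and the weight
  \<open>\<Prod>j. f (m\<^sub>j)\<close> of a tuple, and every orbit has size \<open>1\<close> or \<open>p\<close>; hence modulo \<open>p\<close> only the
  fixed tuples count. These are the tuples constant on blocks, i.e. \<open>p\<close>-fold repetitions of a
  tuple of length \<open>n\<close> with sum \<open>m\<close>, and their weight is the \<open>p\<close>-th power of the weight of
  that shorter tuple, which is congruent to it by Fermat's little theorem.\<close>

lemma funpow_fixed_if_not_dvd_prime: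
  assumes "prime p" "(s ^^ p) x = x" "(s ^^ d) x = x" "\<not> p dvd d"
  shows "s x = x"
proof -
  have "coprime d p"
    using prime_imp_coprime[OF assms(1,4)] by (simp add: coprime_commute)
  then obtain k where k: "[d * k = 1] (mod p)"
    using cong_solve_coprime_nat by auto
  have "d * k mod p = 1"
    using k prime_gt_1_nat[OF assms(1)] by (simp add: cong_def)
  moreover have "(s ^^ (d * k)) x = x"
    using funpow_mod_eq[where m="d * k", OF assms(3)] by simp
  ultimately show ?thesis
    using funpow_mod_eq[where m="d * k", OF assms(2)] by simp
qed

lemma bij_betw_funpow_orbit_prime:
  assumes "prime p" "(s ^^ p) x = x" "s x \<noteq> x"
  shows "bij_betw (\<lambda>n. (s ^^ n) x) {..<p} (orbit s x)"
proof -
  have "x \<in> orbit s x"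
    using assms(2) prime_gt_0_nat[OF assms(1)] by (auto simp: orbit_altdef intro!: exI[of _ p])
  define d where "d = funpow_dist1 s x x"
  have "(s ^^ d) x = x" "d \<le> p"
    using \<open>x \<in> orbit s x\<close> funpow_dist1_prop funpow_dist1_le_self assms(2) prime_gt_0_nat[OF assms(1)]
    by (auto simp: d_def)
  moreover have "\<not> p dvd d" if "d < p"
    using that by (auto simp: d_def dest: dvd_imp_le)
  ultimately have "d = p"
    using funpow_fixed_if_not_dvd_prime[OF assms(1,2)] assms(3) by fastforce
  then show ?thesis
    using inj_on_funpow_dist1[OF \<open>x \<in> orbit s x\<close>] orbit_conv_funpow_dist1[OF \<open>x \<in> orbit s x\<close>]
    by (simp add: d_def bij_betw_def atLeast0LessThan)
qed

lemma sum_orbit_prime: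
  assumes "prime p" "(s ^^ p) x = x" "s x \<noteq> x" "\<forall>y\<in>orbit s x. g y = g x"
  shows "sum g (orbit s x) = p * g x"
proof -
  have bij: "bij_betw (\<lambda>n. (s ^^ n) x) {..<p} (orbit s x)"
    using bij_betw_funpow_orbit_prime[OF assms(1-3)] .
  then have "sum g (orbit s x) = (\<Sum>n<p. g ((s ^^ n) x))"
    using sum.reindex_bij_betw[OF bij, of g] by simp
  also have "\<dots> = p * g x"
    using assms(4) bij_betw_apply[OF bij] by simp
  finally show ?thesis .
qed

lemma orbit_not_fixed:
  assumes "x \<in> orbit s x" "s x \<noteq> x" "y \<in> orbit s x"
  shows "s y \<noteq> y"
proof
  assume "s y = y"
  then have "orbit s y = {y}"
    by (simp add: orbit_eq_singleton_iff)
  moreover have "x \<in> orbit s y"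
    using orbit_swap[OF assms(1,3)] .
  ultimately show False
    using assms(2) \<open>s y = y\<close> by simp
qed

lemma mem_orbit_if_step_mem:
  assumes "(s ^^ n) y = y" "0 < n" "s y \<in> orbit s x"
  shows "y \<in> orbit s x"
proof -
  have "y = (s ^^ (n - 1)) (s y)"
    using assms(1,2) by (metis Suc_diff_1 comp_apply funpow_Suc_right)
  then show ?thesis
    using funpow_in_orbit[OF assms(3)] by metis
qed

lemma cong_sum_fixed_points:
  fixes g :: "'a \<Rightarrow> nat"
  assumes "prime p" "finite S" "\<forall>x\<in>S. s x \<in> S" "\<forall>x\<in>S. (s ^^ p) x = x" "\<forall>x\<in>S. g (s x) = g x"
  shows "[sum g S = sum g {x\<in>S. s x = x}] (mod p)"
  using assms(2-5)
proof (induction S rule: finite_psubset_induct)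
  case (psubset S)
  show ?case
  proof (cases "\<forall>x\<in>S. s x = x")
    case True
    then have "{x\<in>S. s x = x} = S" by auto
    then show ?thesis by simp
  next
    case False
    then obtain x where "x \<in> S" "s x \<noteq> x" by auto
    define Orb where "Orb = orbit s x"
    have "y \<in> S \<and> g y = g x" if "y \<in> Orb" for y
      using that unfolding Orb_def
      by induction (use psubset.prems(1,3) \<open>x \<in> S\<close> in simp_all)
    then have "Orb \<subseteq> S" and "\<forall>y\<in>Orb. g y = g x" by auto
    have "(s ^^ p) x = x"
      using psubset.prems(2) \<open>x \<in> S\<close> by simp
    have "x \<in> Orb"
      using bij_betw_apply[OF bij_betw_funpow_orbit_prime[OF assms(1) \<open>(s ^^ p) x = x\<close>], of 0]
        \<open>s x \<noteq> x\<close> prime_gt_0_nat[OF assms(1)] by (simp add: Orb_def)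
    have "sum g Orb = p * g x"
      using sum_orbit_prime[OF assms(1) \<open>(s ^^ p) x = x\<close> \<open>s x \<noteq> x\<close>] \<open>\<forall>y\<in>Orb. g y = g x\<close>
      by (simp add: Orb_def)
    then have "[sum g S = sum g (S - Orb)] (mod p)"
      using sum.subset_diff[OF \<open>Orb \<subseteq> S\<close> psubset.hyps(1), of g] by (simp add: cong_def)
    moreover have "\<forall>y\<in>S - Orb. s y \<in> S - Orb"
      using psubset.prems(1,2) mem_orbit_if_step_mem[where s = s and n = p] prime_gt_0_nat[OF assms(1)]
      by (auto simp: Orb_def)
    moreover have "{y\<in>S - Orb. s y = y} = {y\<in>S. s y = y}"
      using orbit_not_fixed[where x = x and s = s] \<open>x \<in> Orb\<close> \<open>s x \<noteq> x\<close> by (auto simp: Orb_def)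
    moreover have "S - Orb \<subset> S"
      using \<open>x \<in> Orb\<close> \<open>x \<in> S\<close> by blast
    ultimately show ?thesis
      using psubset.IH[of "S - Orb"] psubset.prems by (auto intro: cong_trans)
  qed
qed

lemma div_eq_if_mem_block:
  fixes j a p :: nat
  assumes "j \<in> {a * p..<a * p + p}"
  shows "j div p = a"
  using assms by (intro div_nat_eqI) (auto simp: mult.commute)

lemma sum_div_blocks:
  fixes v :: "nat \<Rightarrow> 'a::comm_semiring_1"
  shows "(\<Sum>j<n * p. v (j div p)) = of_nat p * (\<Sum>a<n. v a)"
proof -
  have "(\<Sum>j<n * p. v (j div p)) = (\<Sum>a<n. \<Sum>j\<in>{a * p..<a * p + p}. v (j div p))"
    by (rule sum.nat_group[symmetric])
  also have "\<dots> = (\<Sum>a<n. \<Sum>j\<in>{a * p..<a * p + p}. v a)"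
    by (intro sum.cong refl) (simp add: div_eq_if_mem_block)
  finally show ?thesis
    by (simp add: sum_distrib_left)
qed

lemma prod_div_blocks:
  fixes v :: "nat \<Rightarrow> 'a::comm_monoid_mult"
  shows "(\<Prod>j<n * p. v (j div p)) = (\<Prod>a<n. v a ^ p)"
proof -
  have "(\<Prod>j<n * p. v (j div p)) = (\<Prod>a<n. \<Prod>j\<in>{a * p..<a * p + p}. v (j div p))"
    by (rule prod.nat_group[symmetric])
  also have "\<dots> = (\<Prod>a<n. \<Prod>j\<in>{a * p..<a * p + p}. v a)"
    by (intro prod.cong refl) (simp add: div_eq_if_mem_block)
  finally show ?thesis
    by simp
qed

definition block_rotate :: "nat \<Rightarrow> nat \<Rightarrow> nat" where
  "block_rotate p j = p * (j div p) + Suc j mod p"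

lemma funpow_block_rotate:
  assumes "0 < p"
  shows "(block_rotate p ^^ k) j = p * (j div p) + (j + k) mod p"
proof (induction k)
  case 0
  then show ?case by simp
next
  case (Suc k)
  then show ?case
    using assms by (simp add: block_rotate_def mod_Suc_eq)
qed

lemma block_rotate_div: "0 < p \<Longrightarrow> block_rotate p j div p = j div p"
  by (simp add: block_rotate_def)

lemma funpow_block_rotate_div:
  "0 < p \<Longrightarrow> (block_rotate p ^^ k) j div p = j div p"
  by (simp add: funpow_block_rotate)

lemma funpow_block_rotate_self: "0 < p \<Longrightarrow> block_rotate p ^^ p = id"
  by (rule ext) (simp add: funpow_block_rotate)

lemma funpow_block_rotate_less_iff:
  "0 < p \<Longrightarrow> (block_rotate p ^^ k) j < n * p \<longleftrightarrow> j < n * p"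
  using funpow_block_rotate_div[of p k j] div_less_iff_less_mult[of p] by metis

lemma bij_betw_block_rotate:
  assumes "0 < p"
  shows "bij_betw (block_rotate p) {..<n * p} {..<n * p}"
proof (rule bij_betw_byWitness[where f' = "block_rotate p ^^ (p - 1)"])
  have "block_rotate p ^^ (p - 1) \<circ> block_rotate p = id" "block_rotate p \<circ> block_rotate p ^^ (p - 1) = id"
    using funpow_block_rotate_self[OF assms] assms
    by (metis Suc_diff_1 funpow_Suc_right, metis Suc_diff_1 funpow.simps(2))
  then show "\<forall>j\<in>{..<n * p}. (block_rotate p ^^ (p - 1)) (block_rotate p j) = j"
    "\<forall>j\<in>{..<n * p}. block_rotate p ((block_rotate p ^^ (p - 1)) j) = j"
    by (simp_all add: fun_eq_iff)
  show "block_rotate p ` {..<n * p} \<subseteq> {..<n * p}"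
    using funpow_block_rotate_less_iff[OF assms, of 1] by auto
  show "(block_rotate p ^^ (p - 1)) ` {..<n * p} \<subseteq> {..<n * p}"
    using funpow_block_rotate_less_iff[OF assms] by auto
qed

lemma funpow_precompose:
  fixes f :: "'a \<Rightarrow> 'a" and h :: "'a \<Rightarrow> 'b"
  shows "((\<lambda>h. h \<circ> f) ^^ k) h = h \<circ> f ^^ k"
  by (induction k) (simp_all add: funpow_swap1)

lemma precompose_block_rotate_eq_iff:
  assumes "0 < p"
  shows "h \<circ> block_rotate p = h \<longleftrightarrow> h = (\<lambda>j. h (p * (j div p)))"
proof
  assume fixed: "h \<circ> block_rotate p = h"
  have "((\<lambda>h. h \<circ> block_rotate p) ^^ k) h = h" for k
    by (induction k) (simp_all add: fixed[unfolded comp_def])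
  then have "h \<circ> block_rotate p ^^ k = h" for k
    by (simp add: funpow_precompose)
  moreover have "(block_rotate p ^^ ((p - 1) * j)) j = p * (j div p)" for j
  proof -
    have "j + (p - 1) * j = p * j"
      using assms by (cases p) simp_all
    then show ?thesis
      by (simp add: funpow_block_rotate[OF assms])
  qed
  ultimately show "h = (\<lambda>j. h (p * (j div p)))"
    by (metis comp_apply)
next
  assume block_const: "h = (\<lambda>j. h (p * (j div p)))"
  have "h (block_rotate p j) = h j" for j
    using fun_cong[OF block_const, of j] fun_cong[OF block_const, of "block_rotate p j"]
      block_rotate_div[OF assms, of j] by simp
  then show "h \<circ> block_rotate p = h"
    by (simp add: fun_eq_iff)
qed

lemma finite_tuples_sum: "finite (tuples_sum N k x)"
proof -
  define V where "V = {v. \<forall>i. (i \<in> {..<N} \<longrightarrow> v i \<in> {..\<Sum>i<N. x i}) \<and> (i \<notin> {..<N} \<longrightarrow> v i = 0)}"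
  have "ms j \<in> V" if "ms \<in> tuples_sum N k x" "j < k" for ms j
  proof -
    have "ms j i \<le> x i" for i
      using that member_le_sum[of j "{..<k}" "\<lambda>j. ms j i"] by (simp add: tuples_sum_def)
    moreover have "x i \<le> (\<Sum>i<N. x i)" if "i < N" for i
      using that member_le_sum[of i "{..<N}" x] by simp
    ultimately show ?thesis
      using that order_trans by (fastforce simp: V_def tuples_sum_def nvecs_def)
  qed
  then have "tuples_sum N k x \<subseteq>
      {ms. \<forall>j. (j \<in> {..<k} \<longrightarrow> ms j \<in> V) \<and> (j \<notin> {..<k} \<longrightarrow> ms j = (\<lambda>_. 0))}"
    by (auto simp: tuples_sum_def)
  moreover have "finite V"
    unfolding V_def by (rule finite_set_of_finite_funs) simp_all
  ultimately show ?thesis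
    using finite_subset finite_set_of_finite_funs[of "{..<k}" V "\<lambda>_. 0"] by blast
qed

lemma precompose_block_rotate_mem_tuples_sum:
  assumes "0 < p" "ms \<in> tuples_sum N (n * p) x"
  shows "ms \<circ> block_rotate p \<in> tuples_sum N (n * p) x"
proof -
  have "(\<Sum>j<n * p. ms (block_rotate p j) i) = (\<Sum>j<n * p. ms j i)" for i
    using sum.reindex_bij_betw[OF bij_betw_block_rotate[OF assms(1)], of "\<lambda>j. ms j i"] by simp
  moreover have "block_rotate p j < n * p \<longleftrightarrow> j < n * p" for j
    using funpow_block_rotate_less_iff[OF assms(1), of 1] by simp
  ultimately show ?thesis
    using assms(2) by (auto simp: tuples_sum_def not_less[symmetric])
qed

lemma block_const_mem_tuples_sum_iff:
  assumes "0 < p"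
  shows "(\<lambda>j. u (j div p)) \<in> tuples_sum N (n * p) (\<lambda>i. p * x i) \<longleftrightarrow> u \<in> tuples_sum N n x"
proof -
  have less_iff: "j div p < n \<longleftrightarrow> j < n * p" for j
    using div_less_iff_less_mult[OF assms] .
  have "(\<forall>j<n * p. u (j div p) \<in> nvecs N) \<longleftrightarrow> (\<forall>a<n. u a \<in> nvecs N)"
    using less_iff assms by (metis div_mult_self1_is_m mult.commute)
  moreover have "(\<forall>j\<ge>n * p. u (j div p) = (\<lambda>_. 0)) \<longleftrightarrow> (\<forall>a\<ge>n. u a = (\<lambda>_. 0))"
    using less_iff assms by (metis div_mult_self1_is_m not_less)
  moreover have "(\<Sum>j<n * p. u (j div p) i) = p * x i \<longleftrightarrow> (\<Sum>a<n. u a i) = x i" for i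
    using sum_div_blocks[where v = "\<lambda>a. u a i" and n = n and p = p] assms by simp
  ultimately show ?thesis
    by (simp add: tuples_sum_def)
qed

lemma inj_block_const:
  fixes p :: nat
  assumes "0 < p"
  shows "inj (\<lambda>(u :: nat \<Rightarrow> 'a) j. u (j div p))"
proof (rule injI, rule ext)
  fix u v :: "nat \<Rightarrow> 'a" and a
  assume "(\<lambda>j. u (j div p)) = (\<lambda>j. v (j div p))"
  then show "u a = v a"
    using fun_cong[of _ _ "p * a"] assms by fastforce
qed

lemma fixed_tuples_block_rotate:
  assumes "0 < p"
  shows "{ms \<in> tuples_sum N (n * p) (\<lambda>i. p * x i). ms \<circ> block_rotate p = ms}
    = (\<lambda>u j. u (j div p)) ` tuples_sum N n x"
proof (intro equalityI subsetI)
  fix ms assume "ms \<in> {ms \<in> tuples_sum N (n * p) (\<lambda>i. p * x i). ms \<circ> block_rotate p = ms}"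
  then have "ms = (\<lambda>j. ms (p * (j div p)))" "ms \<in> tuples_sum N (n * p) (\<lambda>i. p * x i)"
    using precompose_block_rotate_eq_iff[OF assms] by auto
  then show "ms \<in> (\<lambda>u j. u (j div p)) ` tuples_sum N n x"
    using block_const_mem_tuples_sum_iff[OF assms, of "\<lambda>a. ms (p * a)"] by auto
next
  fix ms assume "ms \<in> (\<lambda>u j. u (j div p)) ` tuples_sum N n x"
  then obtain u where "u \<in> tuples_sum N n x" "ms = (\<lambda>j. u (j div p))" by blast
  then show "ms \<in> {ms \<in> tuples_sum N (n * p) (\<lambda>i. p * x i). ms \<circ> block_rotate p = ms}"
    using block_const_mem_tuples_sum_iff[OF assms] block_rotate_div[OF assms]
    by (simp add: comp_def)
qed

lemma cong_pow_prime_self_nat: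
  fixes a p :: nat
  assumes "prime p"
  shows "[a ^ p = a] (mod p)"
proof (cases "p dvd a")
  case True
  then have "p dvd a ^ p"
    using assms prime_gt_0_nat dvd_power dvd_trans by blast
  with True show ?thesis
    by (simp add: cong_def dvd_eq_mod_eq_0)
next
  case False
  have "[a * a ^ (p - 1) = a * 1] (mod p)"
    using fermat_theorem[OF assms False] by (rule cong_scalar_left)
  moreover have "a * a ^ (p - 1) = a ^ p"
    using assms prime_gt_0_nat by (metis Suc_diff_1 power_Suc)
  ultimately show ?thesis
    by simp
qed

theorem theorem8:
  fixes N n p :: nat and f :: "(nat \<Rightarrow> nat) \<Rightarrow> nat" and m :: "nat \<Rightarrow> nat"
  assumes "N \<ge> 1" and "prime p" and "m \<in> nvecs N"
  shows "[gbinom N f (n * p) (\<lambda>i. p * m i) = gbinom N f n m] (mod p)"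
proof -
  have "0 < p"
    using assms(2) prime_gt_0_nat by blast
  define S where "S = tuples_sum N (n * p) (\<lambda>i. p * m i)"
  define g where "g = (\<lambda>ms :: nat \<Rightarrow> nat \<Rightarrow> nat. \<Prod>j<n * p. f (ms j))"
  have "gbinom N f (n * p) (\<lambda>i. p * m i) = sum g S"
    by (simp add: gbinom_def S_def g_def)
  also have "[sum g S = sum g {ms \<in> S. ms \<circ> block_rotate p = ms}] (mod p)"
  proof (rule cong_sum_fixed_points[OF assms(2)])
    show "finite S" "\<forall>ms\<in>S. ms \<circ> block_rotate p \<in> S"
      using finite_tuples_sum precompose_block_rotate_mem_tuples_sum[OF \<open>0 < p\<close>] by (auto simp: S_def)
    show "\<forall>ms\<in>S. ((\<lambda>ms. ms \<circ> block_rotate p) ^^ p) ms = ms"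
      using funpow_block_rotate_self[OF \<open>0 < p\<close>] by (simp add: funpow_precompose)
    show "\<forall>ms\<in>S. g (ms \<circ> block_rotate p) = g ms"
    proof
      fix ms
      show "g (ms \<circ> block_rotate p) = g ms"
        using prod.reindex_bij_betw[OF bij_betw_block_rotate[OF \<open>0 < p\<close>], of "\<lambda>j. f (ms j)"]
        by (simp add: g_def)
    qed
  qed
  also have "sum g {ms \<in> S. ms \<circ> block_rotate p = ms} = (\<Sum>u\<in>tuples_sum N n m. g (\<lambda>j. u (j div p)))"
    unfolding S_def fixed_tuples_block_rotate[OF \<open>0 < p\<close>]
    by (rule sum.reindex[OF inj_on_subset[OF inj_block_const[OF \<open>0 < p\<close>]], simplified])
  also have "\<dots> = (\<Sum>u\<in>tuples_sum N n m. \<Prod>a<n. f (u a) ^ p)"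
    unfolding g_def using prod_div_blocks[where v = "\<lambda>a. f (u a)" for u] by simp
  also have "[\<dots> = (\<Sum>u\<in>tuples_sum N n m. \<Prod>a<n. f (u a))] (mod p)"
    by (intro cong_sum cong_prod cong_pow_prime_self_nat assms(2))
  also have "(\<Sum>u\<in>tuples_sum N n m. \<Prod>a<n. f (u a)) = gbinom N f n m"
    by (simp add: gbinom_def)
  finally show ?thesis .
qed

end
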